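(* Let $k\ge2$ be an integer and let $\{F_n(k)\}$ be the $k$-bonacci sequence: $F_0(k)=\dots=F_{k-2}(k)=0$, $F_{k-1}(k)=1$, and $F_{n+k}(k)=\sum_{l=0}^{k-1}F_{n+l}(k)$ for $n\ge0$. Then \[ \{F_n(k)\}=\sum_{l=0}^{\infty}(\tilde{\mathcal{I}}_k)^l\, I_0^{\,k-1+l}\{1\}, \] the sum being taken termwise (for each index only finitely many summands are nonzero).
   Context: Sequences are indexed by $n=0,1,2,\dots$; sums are termwise and $\{1\}=1,1,1,\dots$. The insertion operator is $I_0\{a_n\}=0,a_0,a_1,\dots$, $I_0^j$ its $j$-fold application ($I_0^0$ the identity). The left integral is $\mathcal{I}_L^0\{a_n\}=\{\sum_{j=0}^{n-1}a_j\}$ (empty sum $=0$). The deformed integral is the operator $\tilde{\mathcal{I}}_k=\sum_{l=0}^{k-2}I_0^l\,\mathcal{I}_L^0$, and $(\tilde{\mathcal{I}}_k)^l$ its $l$-fold application. *)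

theory Defs
  imports Main
begin

type_synonym seq = "nat \<Rightarrow> int"

definition I0 :: "seq \<Rightarrow> seq" where
  "I0 a n = (if n = 0 then 0 else a (n - 1))"

definition IL :: "seq \<Rightarrow> seq" where
  "IL a n = (\<Sum>j<n. a j)"

definition Itilde :: "nat \<Rightarrow> seq \<Rightarrow> seq" where
  "Itilde k a n = (\<Sum>l\<in>{0..k-2}. (I0 ^^ l) (IL a) n)"

definition kterm :: "nat \<Rightarrow> nat \<Rightarrow> seq" where
  "kterm k l = (Itilde k ^^ l) ((I0 ^^ (k - 1 + l)) (\<lambda>_. 1))"

end

theory Submission
  imports Defs
begin

text \<open>With S a = Itilde k (I0 a), the l-th summand is S^l applied to I0^(k-1){1}, so the sum
  is a Neumann series for the linear equation F = I0^(k-1){1} + S F. The k-bonacci sequence solves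
  this equation: both sides start at 0 and have the same first differences, because S adds up
  the k-1 entries preceding the current index. The operator S is additive and strictly causal
  (S a n only depends on a 0, ..., a (n-1)), hence the first N partial sums of the series agree
  with F below N, and the l-th summand vanishes below index k-1+l, making the sum locally finite.\<close>

definition strictly_causal :: "((nat \<Rightarrow> 'a) \<Rightarrow> nat \<Rightarrow> 'b) \<Rightarrow> bool" where
  "strictly_causal S \<longleftrightarrow> (\<forall>a b n. (\<forall>j<n. a j = b j) \<longrightarrow> S a n = S b n)"

lemma strictly_causalD: "strictly_causal S \<Longrightarrow> (\<And>j. j < n \<Longrightarrow> a j = b j) \<Longrightarrow> S a n = S b n"
  unfolding strictly_causal_def by blast

lemma strictly_causal_funpow_eq_0:
  fixes S :: "(nat \<Rightarrow> 'a::zero) \<Rightarrow> nat \<Rightarrow> 'a"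
  assumes "strictly_causal S" and "S (\<lambda>_. 0) = (\<lambda>_. 0)"
    and "\<forall>j<m. c j = 0" and "n < m + l"
  shows "(S ^^ l) c n = 0"
  using assms(4)
proof (induction l arbitrary: n)
  case 0
  then show ?case using assms(3) by simp
next
  case (Suc l)
  have "S ((S ^^ l) c) n = S (\<lambda>_. 0) n"
    using Suc by (intro strictly_causalD[OF assms(1)]) auto
  then show ?case using assms(2) by simp
qed

lemma strictly_causal_partial_sums:
  fixes S :: "(nat \<Rightarrow> 'a::comm_monoid_add) \<Rightarrow> nat \<Rightarrow> 'a"
  assumes causal: "strictly_causal S"
    and sum: "\<And>f (N::nat). S (\<lambda>m. \<Sum>i<N. f i m) = (\<lambda>m. \<Sum>i<N. S (f i) m)"
    and fixpoint: "\<And>n. F n = c n + S F n"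
  shows "n < N \<Longrightarrow> (\<Sum>l<N. (S ^^ l) c n) = F n"
proof (induction N arbitrary: n)
  case 0
  then show ?case by simp
next
  case (Suc N)
  have "(\<Sum>l<Suc N. (S ^^ l) c n) = c n + (\<Sum>l<N. S ((S ^^ l) c) n)"
    by (simp add: sum.lessThan_Suc_shift del: sum.lessThan_Suc)
  also have "\<dots> = c n + S (\<lambda>m. \<Sum>l<N. (S ^^ l) c m) n"
    by (simp add: sum[of "\<lambda>l. (S ^^ l) c"])
  also have "S (\<lambda>m. \<Sum>l<N. (S ^^ l) c m) n = S F n"
    using Suc by (intro strictly_causalD[OF causal]) auto
  finally show ?case
    by (simp only: fixpoint[of n])
qed

lemma funpow_I0_apply: "(I0 ^^ l) a n = (if n < l then 0 else a (n - l))"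
  by (induction l arbitrary: n) (auto simp: I0_def)

lemma IL_I0: "IL (I0 a) = I0 (IL a)"
proof
  fix n
  show "IL (I0 a) n = I0 (IL a) n"
    by (cases n) (simp_all add: IL_def I0_def sum.lessThan_Suc_shift del: sum.lessThan_Suc)
qed

lemma Itilde_I0: "Itilde k (I0 a) = I0 (Itilde k a)"
proof
  fix n
  show "Itilde k (I0 a) n = I0 (Itilde k a) n"
    unfolding Itilde_def funpow_I0_apply IL_I0
    by (cases n) (auto simp: I0_def intro!: sum.cong sum.neutral)
qed

lemma funpow_Itilde_I0: "(Itilde k ^^ l) (I0 a) = I0 ((Itilde k ^^ l) a)"
  by (induction l) (simp_all add: Itilde_I0)

lemma kterm_Suc: "kterm k (Suc l) = Itilde k (I0 (kterm k l))"
  by (simp add: kterm_def funpow_Itilde_I0)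

lemma kterm_eq_funpow:
  "kterm k l = ((\<lambda>a. Itilde k (I0 a)) ^^ l) ((I0 ^^ (k - 1)) (\<lambda>_. 1))"
  by (induction l) (simp_all add: kterm_def[of k 0] kterm_Suc)

lemma Itilde_I0_apply: "Itilde k (I0 a) n = (\<Sum>l\<in>{0..k-2}. IL a (n - Suc l))"
  unfolding Itilde_def funpow_I0_apply IL_I0
  by (auto simp: I0_def IL_def intro!: sum.cong)

lemma strictly_causal_Itilde_I0: "strictly_causal (\<lambda>a. Itilde k (I0 a))"
  unfolding strictly_causal_def Itilde_I0_apply IL_def by (auto intro!: sum.cong)

lemma Itilde_I0_sum:
  "Itilde k (I0 (\<lambda>m. \<Sum>i\<in>A. f i m)) = (\<lambda>m. \<Sum>i\<in>A. Itilde k (I0 (f i)) m)"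
proof
  fix n
  have "(\<Sum>l\<in>{0..k-2}. \<Sum>m<n - Suc l. \<Sum>i\<in>A. f i m)
      = (\<Sum>l\<in>{0..k-2}. \<Sum>i\<in>A. \<Sum>m<n - Suc l. f i m)"
    by (intro sum.cong refl sum.swap)
  also have "\<dots> = (\<Sum>i\<in>A. \<Sum>l\<in>{0..k-2}. \<Sum>m<n - Suc l. f i m)"
    by (rule sum.swap)
  finally show "Itilde k (I0 (\<lambda>m. \<Sum>i\<in>A. f i m)) n = (\<Sum>i\<in>A. Itilde k (I0 (f i)) n)"
    by (simp add: Itilde_I0_apply IL_def)
qed

lemma kbonacci_Suc:
  fixes F :: "nat \<Rightarrow> int"
  assumes "k \<ge> 2"
    and initial: "\<forall>i < k - 1. F i = 0" "F (k - 1) = 1"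
    and recurrence: "\<forall>n. F (n + k) = (\<Sum>l<k. F (n + l))"
  shows "F (Suc n) = F n + (if Suc n = k - 1 then 1 else 0)
                     + (\<Sum>l\<in>{0..k-2}. if l < n then F (n - Suc l) else 0)"
proof (cases "n < k - 1")
  case True
  then show ?thesis
    using initial by (auto intro!: sum.neutral)
next
  case False
  then obtain d where n: "n = d + (k - 1)"
    using le_iff_add by (metis add.commute not_less)
  have k: "k = Suc (k - 1)"
    using \<open>k \<ge> 2\<close> by simp
  have "F (Suc n) = (\<Sum>l<k. F (d + l))"
    using recurrence n k by (metis add_Suc_right)
  also have "\<dots> = (\<Sum>l<k - 1. F (d + l)) + F n"
    using n k by (metis sum.lessThan_Suc)
  also have "(\<Sum>l<k - 1. F (d + l)) = (\<Sum>l<k - 1. F (d + (k - 1 - Suc l)))"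
    by (rule sum.nat_diff_reindex[symmetric])
  also have "\<dots> = (\<Sum>l\<in>{0..k-2}. if l < n then F (n - Suc l) else 0)"
    using n \<open>k \<ge> 2\<close> by (intro sum.cong) auto
  finally show ?thesis
    using False by simp
qed

lemma kbonacci_integral_equation:
  fixes F :: "nat \<Rightarrow> int"
  assumes "k \<ge> 2"
    and initial: "\<forall>i < k - 1. F i = 0" "F (k - 1) = 1"
    and recurrence: "\<forall>n. F (n + k) = (\<Sum>l<k. F (n + l))"
  shows "F n = (I0 ^^ (k - 1)) (\<lambda>_. 1) n + Itilde k (I0 F) n"
proof (induction n)
  case 0
  show ?case
    using initial \<open>k \<ge> 2\<close> by (simp add: funpow_I0_apply Itilde_I0_apply IL_def)
next
  case (Suc n)
  have IL_Suc_diff: "IL F (Suc n - Suc l) = IL F (n - Suc l) + (if l < n then F (n - Suc l) else 0)"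
    for l
  proof (cases "l < n")
    case True
    then have "Suc n - Suc l = Suc (n - Suc l)"
      by simp
    then show ?thesis
      using True by (simp add: IL_def)
  qed (simp add: IL_def)
  have "Itilde k (I0 F) (Suc n)
      = Itilde k (I0 F) n + (\<Sum>l\<in>{0..k-2}. if l < n then F (n - Suc l) else 0)"
    by (simp only: Itilde_I0_apply IL_Suc_diff sum.distrib)
  moreover have "(I0 ^^ (k - 1)) (\<lambda>_. 1) (Suc n)
      = (I0 ^^ (k - 1)) (\<lambda>_. 1) n + (if Suc n = k - 1 then 1 else 0)"
    by (simp add: funpow_I0_apply)
  ultimately show ?case
    using Suc.IH kbonacci_Suc[OF assms] by simp
qed

theorem mainTheorem17:
  fixes k :: nat and F :: "nat \<Rightarrow> int"
  assumes "k \<ge> 2"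
    and "\<forall>i < k - 1. F i = 0"
    and "F (k - 1) = 1"
    and "\<forall>n. F (n + k) = (\<Sum>l<k. F (n + l))"
  shows "\<forall>n. finite {l. kterm k l n \<noteq> 0} \<and>
              F n = (\<Sum>l\<in>{l. kterm k l n \<noteq> 0}. kterm k l n)"
proof
  fix n
  have zero: "Itilde k (I0 (\<lambda>_. 0)) = (\<lambda>_. 0)"
    using Itilde_I0_sum[of k _ "{}"] by simp
  have support: "{l. kterm k l n \<noteq> 0} \<subseteq> {..<Suc n}"
  proof
    fix l
    assume "l \<in> {l. kterm k l n \<noteq> 0}"
    then have "\<not> n < k - 1 + l"
      using strictly_causal_funpow_eq_0[OF strictly_causal_Itilde_I0 zero, of "k - 1"]
      by (auto simp: kterm_eq_funpow funpow_I0_apply)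
    then show "l \<in> {..<Suc n}"
      using \<open>k \<ge> 2\<close> by simp
  qed
  then have "(\<Sum>l\<in>{l. kterm k l n \<noteq> 0}. kterm k l n) = (\<Sum>l<Suc n. kterm k l n)"
    by (intro sum.mono_neutral_left) auto
  also have "\<dots> = F n"
    unfolding kterm_eq_funpow
    by (rule strictly_causal_partial_sums[OF strictly_causal_Itilde_I0 Itilde_I0_sum
          kbonacci_integral_equation[OF assms]]) simp
  finally show "finite {l. kterm k l n \<noteq> 0} \<and> F n = (\<Sum>l\<in>{l. kterm k l n \<noteq> 0}. kterm k l n)"
    using support finite_subset by auto
qed

end
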